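(* Let $\mathbb{D}\subset\mathbb{C}$ be the open unit disc, $D=\{(z,z):z\in\mathbb{D}\}\subset\mathbb{D}^2$, and define $H:\mathbb{D}^2\setminus D\to\mathbb{C}^3$ by \[ H(z,w)=\Big(\frac{1-zw}{z-w},\; i\,\frac{1+zw}{z-w},\; -i\,\frac{z+w}{z-w}\Big). \] Let \[ \mathcal{D}^{(2)}_{1,\infty}=\{(z_1,z_2,z_3)\in\mathbb{C}^3:\ 1<|z_1|^2+|z_2|^2-|z_3|^2,\ z_1^2+z_2^2-z_3^2=1,\ \operatorname{Im}(z_2(\overline{z_1}+\overline{z_3}))>0\}. \] For $a\in[0,1)$ let $\mathscr{F}_a=\{(z_1,z_2)\in\mathbb{D}^2: |\frac{z_1-z_2}{1-\overline{z_1}z_2}|=a\}$, and for $\alpha>1$ let \[ \eta^{(2)}_\alpha=\Big\{(z_1,z_2,z_3)\in\mathcal{D}^{(2)}_{1,\infty}: |z_1|^2+|z_2|^2-|z_3|^2=\sqrt{\tfrac{\alpha+1}{2}}\Big\}. \] Then $H$ maps $\mathbb{D}^2\setminus D$ biholomorphically onto $\mathcal{D}^{(2)}_{1,\infty}$. Moreover, for every $a\in(0,1)$, $H$ restricts to a CR-isomorphism between $\mathscr{F}_a$ and $\eta^{(2)}_\alpha$, where $\alpha=\frac{8}{a^4}-\frac{8}{a^2}+1$.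
   Context: $\mathscr{F}_a$ for $a\in(0,1)$ and $\eta^{(2)}_\alpha$ are real hypersurfaces, regarded as CR manifolds with the CR structures induced from $\mathbb{C}^2$ and $\mathbb{C}^3$ respectively. *)

theory Defs
  imports "HOL-Analysis.Analysis"
begin

definition sc2 :: "complex \<Rightarrow> complex \<times> complex \<Rightarrow> complex \<times> complex" where
  "sc2 c v = (c * fst v, c * snd v)"

definition sc3 :: "complex \<Rightarrow> complex \<times> complex \<times> complex \<Rightarrow> complex \<times> complex \<times> complex" where
  "sc3 c v = (c * fst v, c * fst (snd v), c * snd (snd v))"

text \<open>Holomorphic maps: real Frechet differentiable with complex-linear derivative at every point.\<close>

definition holo23 :: "(complex \<times> complex) set \<Rightarrow> (complex \<times> complex \<Rightarrow> complex \<times> complex \<times> complex) \<Rightarrow> bool" where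
  "holo23 U f \<longleftrightarrow> open U \<and>
     (\<forall>x\<in>U. \<exists>f'. (f has_derivative f') (at x) \<and> (\<forall>c v. f' (sc2 c v) = sc3 c (f' v)))"

definition holo32 :: "(complex \<times> complex \<times> complex) set \<Rightarrow> (complex \<times> complex \<times> complex \<Rightarrow> complex \<times> complex) \<Rightarrow> bool" where
  "holo32 V f \<longleftrightarrow> open V \<and>
     (\<forall>x\<in>V. \<exists>f'. (f has_derivative f') (at x) \<and> (\<forall>c v. f' (sc3 c v) = sc2 c (f' v)))"

text \<open>Holomorphic map on a (complex submanifold) subset M of C^3: locally the restriction of an
  ambient holomorphic map.\<close>

definition holo_on_sub32 :: "(complex \<times> complex \<times> complex) set \<Rightarrow> (complex \<times> complex \<times> complex \<Rightarrow> complex \<times> complex) \<Rightarrow> bool" where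
  "holo_on_sub32 M g \<longleftrightarrow>
     (\<forall>p\<in>M. \<exists>V G. open V \<and> p \<in> V \<and> holo32 V G \<and> (\<forall>q\<in>V \<inter> M. G q = g q))"

definition biholo :: "(complex \<times> complex) set \<Rightarrow> (complex \<times> complex \<times> complex) set \<Rightarrow> (complex \<times> complex \<Rightarrow> complex \<times> complex \<times> complex) \<Rightarrow> bool" where
  "biholo U M f \<longleftrightarrow> holo23 U f \<and> bij_betw f U M \<and> holo_on_sub32 M (inv_into U f)"

definition tangent_vecs :: "'a::real_normed_vector set \<Rightarrow> 'a \<Rightarrow> 'a set" where
  "tangent_vecs S p = {v. \<exists>\<gamma>. \<gamma> 0 = p \<and> (\<forall>t\<in>{-1<..<1}. \<gamma> t \<in> S) \<and>
       \<gamma> C1_differentiable_on {-1<..<1} \<and> (\<gamma> has_vector_derivative v) (at 0)}"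

text \<open>CR map between real submanifolds: locally the restriction of a C^1 ambient map, whose
  differential is complex linear on the complex tangent space (CR distribution)
  T_p S \<inter> J T_p S, with J the complex structures JA, JB.\<close>

definition CR_map :: "('a::real_normed_vector \<Rightarrow> 'a) \<Rightarrow> ('b::real_normed_vector \<Rightarrow> 'b) \<Rightarrow> 'a set \<Rightarrow> ('a \<Rightarrow> 'b) \<Rightarrow> bool" where
  "CR_map JA JB S \<phi> \<longleftrightarrow>
     (\<forall>p\<in>S. \<exists>V \<Phi> \<Phi>'. open V \<and> p \<in> V \<and>
        (\<forall>x\<in>V. (\<Phi> has_derivative blinfun_apply (\<Phi>' x)) (at x)) \<and> continuous_on V \<Phi>' \<and>
        (\<forall>x\<in>V \<inter> S. \<Phi> x = \<phi> x) \<and>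
        (\<forall>v\<in>tangent_vecs S p. JA v \<in> tangent_vecs S p \<longrightarrow>
            blinfun_apply (\<Phi>' p) (JA v) = JB (blinfun_apply (\<Phi>' p) v)))"

definition CR_iso :: "('a::real_normed_vector \<Rightarrow> 'a) \<Rightarrow> ('b::real_normed_vector \<Rightarrow> 'b) \<Rightarrow> 'a set \<Rightarrow> 'b set \<Rightarrow> ('a \<Rightarrow> 'b) \<Rightarrow> bool" where
  "CR_iso JA JB S S' \<phi> \<longleftrightarrow> bij_betw \<phi> S S' \<and> CR_map JA JB S \<phi> \<and> CR_map JB JA S' (inv_into S \<phi>)"

definition bidisc_minus_diag :: "(complex \<times> complex) set" where
  "bidisc_minus_diag = {(z, w). z \<in> ball 0 1 \<and> w \<in> ball 0 1 \<and> z \<noteq> w}"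

definition Hmap :: "complex \<times> complex \<Rightarrow> complex \<times> complex \<times> complex" where
  "Hmap = (\<lambda>(z, w). ((1 - z * w) / (z - w), \<i> * ((1 + z * w) / (z - w)), - \<i> * ((z + w) / (z - w))))"

definition D2_1inf :: "(complex \<times> complex \<times> complex) set" where
  "D2_1inf = {(z1, z2, z3).
      1 < (cmod z1)\<^sup>2 + (cmod z2)\<^sup>2 - (cmod z3)\<^sup>2 \<and>
      z1\<^sup>2 + z2\<^sup>2 - z3\<^sup>2 = 1 \<and>
      Im (z2 * (cnj z1 + cnj z3)) > 0}"

definition Fa :: "real \<Rightarrow> (complex \<times> complex) set" where
  "Fa a = {(z1, z2). z1 \<in> ball 0 1 \<and> z2 \<in> ball 0 1 \<and> cmod ((z1 - z2) / (1 - cnj z1 * z2)) = a}"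

definition eta2 :: "real \<Rightarrow> (complex \<times> complex \<times> complex) set" where
  "eta2 \<alpha> = {(z1, z2, z3). (z1, z2, z3) \<in> D2_1inf \<and>
      (cmod z1)\<^sup>2 + (cmod z2)\<^sup>2 - (cmod z3)\<^sup>2 = sqrt ((\<alpha> + 1) / 2)}"

end

(*
  The map H is inverted explicitly. Writing u = z1 + z3, the inverse is
  G(z1, z2, z3) = (cayley u (1 - z2), cayley u (-1 - z2)), where cayley is a rotated Cayley
  transform. On the quadric z1^2 + z2^2 - z3^2 = 1, the identity
  2 Im(z2 conj u)^2 - 2 (Im u)^2 = |u|^2 (N - 1), with N = |z1|^2 + |z2|^2 - |z3|^2, turns the
  defining inequalities of the domain into Im(u conj(1 - z2)) > 0 and Im(u conj(-1 - z2)) > 0.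
  These say that both components of G lie in the unit disc. H and G are rational maps with
  complex-linear differentials, which gives holomorphy and, by restriction, the CR property.
  Finally N(H(z, w)) = 2 / rho(z, w)^2 - 1, where rho is the pseudo-hyperbolic distance.
  So H carries the level set rho = a onto the level set N = 2 / a^2 - 1 = sqrt((alpha + 1) / 2).
*)

theory Submission
  imports Defs
begin

section \<open>Complex-linear differentials\<close>

definition jac23 ::
    "complex \<times> complex \<times> complex \<Rightarrow> complex \<times> complex \<times> complex \<Rightarrow>
     complex \<times> complex \<Rightarrow> complex \<times> complex \<times> complex" where
  "jac23 P Q v = sc3 (fst v) P + sc3 (snd v) Q"

definition jac32 ::
    "complex \<times> complex \<Rightarrow> complex \<times> complex \<Rightarrow> complex \<times> complex \<Rightarrow>
     complex \<times> complex \<times> complex \<Rightarrow> complex \<times> complex" where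
  "jac32 P Q R v = sc2 (fst v) P + sc2 (fst (snd v)) Q + sc2 (snd (snd v)) R"

lemma jac23_sc2: "jac23 P Q (sc2 c v) = sc3 c (jac23 P Q v)"
  by (simp add: jac23_def sc2_def sc3_def algebra_simps)

lemma jac32_sc3: "jac32 P Q R (sc3 c v) = sc2 c (jac32 P Q R v)"
  by (simp add: jac32_def sc2_def sc3_def algebra_simps)

lemma continuous_on_jac23:
  "continuous_on S P \<Longrightarrow> continuous_on S Q \<Longrightarrow> continuous_on S (\<lambda>x. jac23 (P x) (Q x) v)"
  unfolding jac23_def sc3_def by (intro continuous_intros)

lemma continuous_on_jac32:
  "continuous_on S P \<Longrightarrow> continuous_on S Q \<Longrightarrow> continuous_on S R \<Longrightarrow>
    continuous_on S (\<lambda>x. jac32 (P x) (Q x) (R x) v)"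
  unfolding jac32_def sc2_def by (intro continuous_intros)

lemma holo23_jac23:
  assumes "open U" "\<And>x. x \<in> U \<Longrightarrow> (f has_derivative jac23 (P x) (Q x)) (at x)"
  shows "holo23 U f"
  unfolding holo23_def using assms jac23_sc2 by blast

lemma holo32_jac32:
  assumes "open V" "\<And>x. x \<in> V \<Longrightarrow> (f has_derivative jac32 (P x) (Q x) (R x)) (at x)"
  shows "holo32 V f"
  unfolding holo32_def using assms jac32_sc3 by blast

text \<open>The differential of \<open>\<Phi>\<close> is assumed complex linear on the whole ambient space, so the
  condition on the complex tangent space holds for trivial reasons.\<close>

lemma CR_map_of_C1_extension:
  fixes \<Phi> :: "'a::euclidean_space \<Rightarrow> 'b::real_normed_vector"
  assumes "open V" "S \<subseteq> V" "\<And>x. x \<in> V \<Longrightarrow> (\<Phi> has_derivative D x) (at x)"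
    and "\<And>x v. x \<in> V \<Longrightarrow> D x (JA v) = JB (D x v)"
    and "\<And>v. continuous_on V (\<lambda>x. D x v)"
    and "\<And>x. x \<in> S \<Longrightarrow> \<Phi> x = \<phi> x"
  shows "CR_map JA JB S \<phi>"
  unfolding CR_map_def
proof
  fix p assume "p \<in> S"
  with assms(2) have "p \<in> V" by auto
  have D_eq: "blinfun_apply (Blinfun (D x)) = D x" if "x \<in> V" for x
    using assms(3)[OF that] by (simp add: bounded_linear_Blinfun_apply has_derivative_bounded_linear)
  have "continuous_on V (\<lambda>x. Blinfun (D x))"
  proof (rule continuous_on_blinfun_componentwise)
    fix i :: 'a
    show "continuous_on V (\<lambda>x. blinfun_apply (Blinfun (D x)) i)"
      using assms(5)[of i] by (simp add: D_eq cong: continuous_on_cong)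
  qed
  then show "\<exists>V \<Phi> \<Phi>'. open V \<and> p \<in> V \<and>
        (\<forall>x\<in>V. (\<Phi> has_derivative blinfun_apply (\<Phi>' x)) (at x)) \<and> continuous_on V \<Phi>' \<and>
        (\<forall>x\<in>V \<inter> S. \<Phi> x = \<phi> x) \<and>
        (\<forall>v\<in>tangent_vecs S p. JA v \<in> tangent_vecs S p \<longrightarrow>
            blinfun_apply (\<Phi>' p) (JA v) = JB (blinfun_apply (\<Phi>' p) v))"
    using \<open>p \<in> V\<close> assms(1,3,4,6) D_eq
    by (intro exI[of _ V] exI[of _ \<Phi>] exI[of _ "\<lambda>x. Blinfun (D x)"]) auto
qed

section \<open>A rotated Cayley transform\<close>

text \<open>With \<open>t = u / s\<close>, \<open>cayley u s = \<i> * (t - \<i>) / (t + \<i>)\<close>: a rotated Cayley transform in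
  homogeneous coordinates, mapping \<open>Im (u * cnj s) > 0\<close> into the unit disc.\<close>

definition cayley :: "complex \<Rightarrow> complex \<Rightarrow> complex" where
  "cayley u s = (s + \<i> * u) / (u + \<i> * s)"

lemma norm_sq_diff_cayley: "(cmod (u + \<i> * s))\<^sup>2 - (cmod (s + \<i> * u))\<^sup>2 = 4 * Im (u * cnj s)"
  unfolding cmod_power2 by (simp add: power2_eq_square algebra_simps)

lemma cayley_in_disc:
  assumes "Im (u * cnj s) > 0"
  shows "u + \<i> * s \<noteq> 0" and "cmod (cayley u s) < 1"
proof -
  have lt: "(cmod (s + \<i> * u))\<^sup>2 < (cmod (u + \<i> * s))\<^sup>2"
    using norm_sq_diff_cayley[of u s] assms by linarith
  then show "u + \<i> * s \<noteq> 0" by auto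
  with lt show "cmod (cayley u s) < 1"
    by (simp add: cayley_def norm_divide divide_less_eq power_less_imp_less_base)
qed

lemma cayley_cross_diff:
  "(s + \<i> * u) * (u + \<i> * t) - (t + \<i> * u) * (u + \<i> * s) = 2 * u * (s - t)"
  by (simp add: algebra_simps)

lemma cayley_inj:
  assumes "u \<noteq> 0" "u + \<i> * s \<noteq> 0" "u + \<i> * t \<noteq> 0" "cayley u s = cayley u t"
  shows "s = t"
proof -
  have "(s + \<i> * u) * (u + \<i> * t) - (t + \<i> * u) * (u + \<i> * s) = 0"
    using assms(2-4) by (simp add: cayley_def divide_simps)
  then show ?thesis
    using assms(1) unfolding cayley_cross_diff by simp
qed

lemma cayley_scale:
  assumes "m \<noteq> 0"
  shows "cayley (m * u) (m * s) = cayley u s"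
proof -
  have "cayley (m * u) (m * s) = (m * (s + \<i> * u)) / (m * (u + \<i> * s))"
    by (simp add: cayley_def algebra_simps)
  then show ?thesis
    using assms by (simp add: cayley_def)
qed

section \<open>The map H and its inverse\<close>

definition lorentz_form :: "complex \<times> complex \<times> complex \<Rightarrow> real" where
  "lorentz_form = (\<lambda>(z1, z2, z3). (cmod z1)\<^sup>2 + (cmod z2)\<^sup>2 - (cmod z3)\<^sup>2)"

lemma lorentz_form_quadric_identity:
  assumes "z1\<^sup>2 + z2\<^sup>2 - z3\<^sup>2 = 1"
  shows "2 * (Im (z2 * cnj (z1 + z3)))\<^sup>2 - 2 * (Im (z1 + z3))\<^sup>2 =
    (cmod (z1 + z3))\<^sup>2 * (lorentz_form (z1, z2, z3) - 1)"
proof -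
  define u where "u = z1 + z3"
  have "(cmod u)\<^sup>2 * ((cmod z1)\<^sup>2 - (cmod z3)\<^sup>2) = (cmod u)\<^sup>2 * Re (u * cnj (z1 - z3))"
    unfolding u_def cmod_power2 by (simp add: power2_eq_square algebra_simps)
  also have "\<dots> = Re (u\<^sup>2 * cnj (u * (z1 - z3)))"
    unfolding cmod_power2 by (simp add: power2_eq_square algebra_simps)
  also have "u * (z1 - z3) = 1 - z2\<^sup>2"
    using assms by (simp add: u_def algebra_simps power2_eq_square)
  finally have "(cmod u)\<^sup>2 * ((cmod z1)\<^sup>2 - (cmod z3)\<^sup>2) = Re (u\<^sup>2 * (1 - (cnj z2)\<^sup>2))"
    by simp
  moreover have "2 * (Im (z2 * cnj u))\<^sup>2 - 2 * (Im u)\<^sup>2 =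
      Re (u\<^sup>2 * (1 - (cnj z2)\<^sup>2)) + (cmod u)\<^sup>2 * ((cmod z2)\<^sup>2 - 1)"
    unfolding cmod_power2 by (simp add: power2_eq_square algebra_simps)
  ultimately show ?thesis
    by (simp add: u_def lorentz_form_def algebra_simps)
qed

lemma D2_1inf_Im_mult_cnj_pos:
  assumes "(z1, z2, z3) \<in> D2_1inf"
  shows "Im ((z1 + z3) * cnj (1 - z2)) > 0" and "Im ((z1 + z3) * cnj (- 1 - z2)) > 0"
proof -
  define u where "u = z1 + z3"
  define Y where "Y = Im (z2 * cnj u)"
  have quadric: "z1\<^sup>2 + z2\<^sup>2 - z3\<^sup>2 = 1" and "lorentz_form (z1, z2, z3) > 1" and "Y > 0"
    using assms by (simp_all add: D2_1inf_def lorentz_form_def Y_def u_def)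
  moreover from \<open>Y > 0\<close> have "u \<noteq> 0"
    by (auto simp: Y_def)
  ultimately have "2 * Y\<^sup>2 - 2 * (Im u)\<^sup>2 > 0"
    using lorentz_form_quadric_identity[OF quadric] by (simp add: Y_def u_def)
  then have "\<bar>Im u\<bar>\<^sup>2 < Y\<^sup>2"
    by simp
  then have "\<bar>Im u\<bar> < Y"
    by (rule power_less_imp_less_base) (use \<open>Y > 0\<close> in simp)
  moreover have "Im (u * cnj (1 - z2)) = Im u + Y" and "Im (u * cnj (- 1 - z2)) = Y - Im u"
    by (simp_all add: Y_def algebra_simps)
  ultimately show "Im ((z1 + z3) * cnj (1 - z2)) > 0" and "Im ((z1 + z3) * cnj (- 1 - z2)) > 0"
    unfolding u_def[symmetric] by linarith+
qed

lemma one_minus_i_mult_neq_0: "cmod z < 1 \<Longrightarrow> 1 - \<i> * z \<noteq> 0"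
  by (metis norm_ii norm_mult mult_1 right_minus_eq less_irrefl norm_one)

lemma Hmap_components:
  assumes "Hmap (z, w) = (z1, z2, z3)"
  shows "z1 = (1 - z * w) / (z - w)" "z2 = \<i> * ((1 + z * w) / (z - w))"
    "z3 = - \<i> * ((z + w) / (z - w))"
  using assms by (auto simp: Hmap_def)

lemma Hmap_z1_plus_z3:
  assumes "Hmap (z, w) = (z1, z2, z3)"
  shows "z1 + z3 = (1 - \<i> * z) * (1 - \<i> * w) / (z - w)"
proof -
  have "z1 + z3 = ((1 - z * w) - \<i> * (z + w)) / (z - w)"
    using Hmap_components[OF assms] by (simp add: diff_divide_distrib)
  then show ?thesis
    by (simp add: algebra_simps)
qed

lemma lorentz_form_Hmap:
  assumes "z \<noteq> w"
  shows "lorentz_form (Hmap (z, w)) = 1 + 2 * (1 - (cmod z)\<^sup>2) * (1 - (cmod w)\<^sup>2) / (cmod (z - w))\<^sup>2"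
proof -
  have "(cmod (1 - z * w))\<^sup>2 + (cmod (1 + z * w))\<^sup>2 - (cmod (z + w))\<^sup>2 =
      2 * (1 - (cmod z)\<^sup>2) * (1 - (cmod w)\<^sup>2) + (cmod (z - w))\<^sup>2"
    unfolding cmod_power2 by (simp add: power2_eq_square algebra_simps)
  then show ?thesis
    using assms by (simp add: lorentz_form_def Hmap_def norm_mult norm_divide divide_simps)
qed

lemma Hmap_quadric:
  assumes "z \<noteq> w" "Hmap (z, w) = (z1, z2, z3)"
  shows "z1\<^sup>2 + z2\<^sup>2 - z3\<^sup>2 = 1"
proof -
  have "z1\<^sup>2 + z2\<^sup>2 - z3\<^sup>2 =
      (1 - z * w)\<^sup>2 / (z - w)\<^sup>2 - (1 + z * w)\<^sup>2 / (z - w)\<^sup>2 + (z + w)\<^sup>2 / (z - w)\<^sup>2"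
    by (simp add: Hmap_components[OF assms(2)] power_divide power_mult_distrib)
  also have "\<dots> = ((1 - z * w)\<^sup>2 - (1 + z * w)\<^sup>2 + (z + w)\<^sup>2) / (z - w)\<^sup>2"
    by (simp add: diff_divide_distrib add_divide_distrib)
  also have "(1 - z * w)\<^sup>2 - (1 + z * w)\<^sup>2 + (z + w)\<^sup>2 = (z - w)\<^sup>2"
    by (simp add: algebra_simps power2_eq_square)
  finally show ?thesis
    using assms(1) by simp
qed

lemma Hmap_Im_pos:
  assumes "cmod z < 1" "cmod w < 1" "z \<noteq> w" "Hmap (z, w) = (z1, z2, z3)"
  shows "Im (z2 * cnj (z1 + z3)) > 0"
proof -
  have q: "z - w \<noteq> 0"
    using assms(3) by simp
  have "z2 * cnj (z1 + z3) = \<i> * ((1 + z * w) / (z - w)) * cnj ((1 - \<i> * z) * (1 - \<i> * w) / (z - w))"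
    by (simp add: Hmap_components(2)[OF assms(4)] Hmap_z1_plus_z3[OF assms(4)])
  also have "\<dots> = \<i> * ((1 + z * w) * cnj ((1 - \<i> * z) * (1 - \<i> * w))) / ((z - w) * cnj (z - w))"
    using q by (simp add: field_simps)
  also have "\<dots> = \<i> * ((1 + z * w) * cnj ((1 - \<i> * z) * (1 - \<i> * w))) / complex_of_real ((cmod (z - w))\<^sup>2)"
    by (simp only: complex_norm_square)
  finally have "Im (z2 * cnj (z1 + z3)) = Re ((1 + z * w) * cnj ((1 - \<i> * z) * (1 - \<i> * w))) / (cmod (z - w))\<^sup>2"
    by simp
  also have "Re ((1 + z * w) * cnj ((1 - \<i> * z) * (1 - \<i> * w))) =
      ((cmod (1 - \<i> * w))\<^sup>2 * (1 - (cmod z)\<^sup>2) + (cmod (1 - \<i> * z))\<^sup>2 * (1 - (cmod w)\<^sup>2)) / 2"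
    unfolding cmod_power2 by (simp add: power2_eq_square algebra_simps)
  finally have Im_eq: "Im (z2 * cnj (z1 + z3)) =
      ((cmod (1 - \<i> * w))\<^sup>2 * (1 - (cmod z)\<^sup>2) + (cmod (1 - \<i> * z))\<^sup>2 * (1 - (cmod w)\<^sup>2)) / 2 / (cmod (z - w))\<^sup>2" .
  have "1 - (cmod z)\<^sup>2 > 0" "1 - (cmod w)\<^sup>2 > 0"
    using assms(1,2) by (simp_all add: abs_square_less_1)
  moreover have "1 - \<i> * z \<noteq> 0" "1 - \<i> * w \<noteq> 0"
    using assms(1,2) one_minus_i_mult_neq_0 by blast+
  ultimately have "(cmod (1 - \<i> * w))\<^sup>2 * (1 - (cmod z)\<^sup>2) + (cmod (1 - \<i> * z))\<^sup>2 * (1 - (cmod w)\<^sup>2) > 0"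
    by (simp add: add_pos_pos)
  then show ?thesis
    unfolding Im_eq using q by simp
qed

lemma Hmap_in_D2_1inf:
  assumes "cmod z < 1" "cmod w < 1" "z \<noteq> w"
  shows "Hmap (z, w) \<in> D2_1inf"
proof -
  obtain z1 z2 z3 where H: "Hmap (z, w) = (z1, z2, z3)"
    by (metis prod.exhaust)
  have "1 - (cmod z)\<^sup>2 > 0" "1 - (cmod w)\<^sup>2 > 0"
    using assms(1,2) by (simp_all add: abs_square_less_1)
  then have "lorentz_form (z1, z2, z3) > 1"
    using lorentz_form_Hmap[OF assms(3)] assms(3) H by simp
  then show ?thesis
    using Hmap_quadric[OF assms(3) H] Hmap_Im_pos[OF assms H]
    by (simp add: H D2_1inf_def lorentz_form_def)
qed

definition pseudo_dist :: "complex \<Rightarrow> complex \<Rightarrow> real" where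
  "pseudo_dist z w = cmod ((z - w) / (1 - cnj z * w))"

lemma norm_sq_one_minus_cnj_mult:
  "(cmod (1 - cnj z * w))\<^sup>2 - (cmod (z - w))\<^sup>2 = (1 - (cmod z)\<^sup>2) * (1 - (cmod w)\<^sup>2)"
  unfolding cmod_power2 by (simp add: power2_eq_square algebra_simps)

lemma one_minus_cnj_mult_neq_0:
  assumes "cmod z < 1" "cmod w < 1"
  shows "1 - cnj z * w \<noteq> 0"
proof -
  have "cmod (cnj z * w) < 1"
    using mult_strict_mono'[OF assms] by (simp add: norm_mult)
  then show ?thesis
    by auto
qed

lemma lorentz_form_Hmap_pseudo_dist:
  assumes "cmod z < 1" "cmod w < 1" "z \<noteq> w"
  shows "lorentz_form (Hmap (z, w)) = 2 / (pseudo_dist z w)\<^sup>2 - 1"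
  using one_minus_cnj_mult_neq_0[OF assms(1,2)] assms(3) norm_sq_one_minus_cnj_mult[of z w]
  by (simp add: lorentz_form_Hmap pseudo_dist_def norm_divide field_simps)

text \<open>On \<open>H(z, w)\<close> one has \<open>z1 + z3 = (1 - \<i>z)(1 - \<i>w)/(z - w)\<close>,
  \<open>1 - z2 = (z - \<i>)(1 - \<i>w)/(z - w)\<close> and \<open>-1 - z2 = -\<i>(1 - \<i>z)(1 + \<i>w)/(z - w)\<close>,
  so the two Cayley quotients below return \<open>z\<close> and \<open>w\<close>.\<close>

definition Ginv :: "complex \<times> complex \<times> complex \<Rightarrow> complex \<times> complex" where
  "Ginv = (\<lambda>(z1, z2, z3). (cayley (z1 + z3) (1 - z2), cayley (z1 + z3) (- 1 - z2)))"

lemma Hmap_divide: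
  assumes "d1 \<noteq> 0" "d2 \<noteq> 0" "n1 * d2 - n2 * d1 \<noteq> 0"
  shows "Hmap (n1 / d1, n2 / d2) =
    ((d1 * d2 - n1 * n2) / (n1 * d2 - n2 * d1), \<i> * ((d1 * d2 + n1 * n2) / (n1 * d2 - n2 * d1)),
     - \<i> * ((n1 * d2 + n2 * d1) / (n1 * d2 - n2 * d1)))"
proof -
  have "n1 / d1 - n2 / d2 = (n1 * d2 - n2 * d1) / (d1 * d2)"
    using assms by (simp add: field_simps)
  then have "n1 / d1 \<noteq> n2 / d2"
    using assms by auto
  then show ?thesis
    using assms by (simp add: Hmap_def field_simps)
qed

lemma Hmap_Ginv:
  assumes "p \<in> D2_1inf"
  shows "Hmap (Ginv p) = p"
proof -
  obtain z1 z2 z3 where p: "p = (z1, z2, z3)"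
    by (metis prod.exhaust)
  define u where "u = z1 + z3"
  define s1 where "s1 = 1 - z2"
  define s2 where "s2 = - 1 - z2"
  have quadric: "z1\<^sup>2 + z2\<^sup>2 - z3\<^sup>2 = 1"
    using assms by (simp add: p D2_1inf_def)
  have "Im (u * cnj s1) > 0" "Im (u * cnj s2) > 0"
    using D2_1inf_Im_mult_cnj_pos assms by (simp_all add: p u_def s1_def s2_def)
  then have d: "u + \<i> * s1 \<noteq> 0" "u + \<i> * s2 \<noteq> 0" and "u \<noteq> 0"
    using cayley_in_disc(1) by auto
  have det: "(s1 + \<i> * u) * (u + \<i> * s2) - (s2 + \<i> * u) * (u + \<i> * s1) = 4 * u"
    unfolding cayley_cross_diff by (simp add: s1_def s2_def)
  have "(u + \<i> * s1) * (u + \<i> * s2) - (s1 + \<i> * u) * (s2 + \<i> * u) = 4 * u * z1"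
    using quadric power2_i unfolding u_def s1_def s2_def by algebra
  moreover have "(u + \<i> * s1) * (u + \<i> * s2) + (s1 + \<i> * u) * (s2 + \<i> * u) = - 4 * \<i> * u * z2"
    using power2_i unfolding s1_def s2_def by algebra
  moreover have "(s1 + \<i> * u) * (u + \<i> * s2) + (s2 + \<i> * u) * (u + \<i> * s1) = 4 * \<i> * u * z3"
    using quadric power2_i unfolding u_def s1_def s2_def by algebra
  ultimately show ?thesis
    using d \<open>u \<noteq> 0\<close>
    by (simp add: p Ginv_def cayley_def Hmap_divide det flip: u_def s1_def s2_def)
qed

lemma Ginv_in_bidisc_minus_diag:
  assumes "p \<in> D2_1inf"
  shows "Ginv p \<in> bidisc_minus_diag"
proof -
  obtain z1 z2 z3 where p: "p = (z1, z2, z3)"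
    by (metis prod.exhaust)
  define u where "u = z1 + z3"
  have pos: "Im (u * cnj (1 - z2)) > 0" "Im (u * cnj (- 1 - z2)) > 0"
    using D2_1inf_Im_mult_cnj_pos assms by (simp_all add: p u_def)
  then have "u \<noteq> 0" by auto
  then have "cayley u (1 - z2) \<noteq> cayley u (- 1 - z2)"
    using cayley_inj[OF _ cayley_in_disc(1)[OF pos(1)] cayley_in_disc(1)[OF pos(2)]] by auto
  then show ?thesis
    using cayley_in_disc(2)[OF pos(1)] cayley_in_disc(2)[OF pos(2)]
    by (simp add: p Ginv_def bidisc_minus_diag_def flip: u_def)
qed

lemma Ginv_Hmap:
  assumes "cmod z < 1" "cmod w < 1" "z \<noteq> w"
  shows "Ginv (Hmap (z, w)) = (z, w)"
proof -
  have q: "z - w \<noteq> 0"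
    using assms(3) by simp
  have mz: "(1 - \<i> * z) / (z - w) \<noteq> 0" and mw: "(1 - \<i> * w) / (z - w) \<noteq> 0"
    using assms one_minus_i_mult_neq_0 by auto
  obtain z1 z2 z3 where H: "Hmap (z, w) = (z1, z2, z3)"
    by (metis prod.exhaust)
  have u: "z1 + z3 = (1 - \<i> * w) / (z - w) * (1 - \<i> * z)"
    "z1 + z3 = (1 - \<i> * z) / (z - w) * (1 - \<i> * w)"
    using Hmap_z1_plus_z3[OF H] by (simp_all add: algebra_simps)
  have s1: "1 - z2 = (1 - \<i> * w) / (z - w) * (z - \<i>)"
    using q by (simp add: Hmap_components[OF H] divide_simps) (simp add: algebra_simps)
  have s2: "- 1 - z2 = (1 - \<i> * z) / (z - w) * (- \<i> * (1 + \<i> * w))"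
    using q by (simp add: Hmap_components[OF H] divide_simps) (simp add: algebra_simps)
  have "cayley (z1 + z3) (1 - z2) = cayley (1 - \<i> * z) (z - \<i>)"
    unfolding u(1) s1 by (rule cayley_scale[OF mw])
  also have "\<dots> = z"
    by (simp add: cayley_def algebra_simps)
  finally have "cayley (z1 + z3) (1 - z2) = z" .
  have "cayley (z1 + z3) (- 1 - z2) = cayley (1 - \<i> * w) (- \<i> * (1 + \<i> * w))"
    unfolding u(2) s2 by (rule cayley_scale[OF mz])
  also have "\<dots> = w"
    by (simp add: cayley_def algebra_simps)
  finally show ?thesis
    using \<open>cayley (z1 + z3) (1 - z2) = z\<close> by (simp add: H Ginv_def)
qed

lemma bij_betw_Hmap: "bij_betw Hmap bidisc_minus_diag D2_1inf"
proof (rule bij_betw_byWitness[where f' = Ginv])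
  show "\<forall>x\<in>bidisc_minus_diag. Ginv (Hmap x) = x" "Hmap ` bidisc_minus_diag \<subseteq> D2_1inf"
    by (auto simp: bidisc_minus_diag_def Ginv_Hmap Hmap_in_D2_1inf)
  show "\<forall>p\<in>D2_1inf. Hmap (Ginv p) = p" "Ginv ` D2_1inf \<subseteq> bidisc_minus_diag"
    by (auto simp: Hmap_Ginv Ginv_in_bidisc_minus_diag)
qed

section \<open>Holomorphy and the CR property\<close>

definition Hmap_dz :: "complex \<times> complex \<Rightarrow> complex \<times> complex \<times> complex" where
  "Hmap_dz = (\<lambda>(z, w). ((w\<^sup>2 - 1) / (z - w)\<^sup>2, - \<i> * (1 + w\<^sup>2) / (z - w)\<^sup>2, 2 * \<i> * w / (z - w)\<^sup>2))"

definition Hmap_dw :: "complex \<times> complex \<Rightarrow> complex \<times> complex \<times> complex" where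
  "Hmap_dw = (\<lambda>(z, w). ((1 - z\<^sup>2) / (z - w)\<^sup>2, \<i> * (1 + z\<^sup>2) / (z - w)\<^sup>2, - 2 * \<i> * z / (z - w)\<^sup>2))"

lemma Hmap_has_derivative:
  assumes "z \<noteq> w"
  shows "(Hmap has_derivative jac23 (Hmap_dz (z, w)) (Hmap_dw (z, w))) (at (z, w))"
proof -
  have Hmap_fst_snd: "Hmap = (\<lambda>p. ((1 - fst p * snd p) / (fst p - snd p),
      \<i> * ((1 + fst p * snd p) / (fst p - snd p)), - \<i> * ((fst p + snd p) / (fst p - snd p))))"
    by (auto simp: Hmap_def)
  have "z - w \<noteq> 0"
    using assms by simp
  then show ?thesis
    unfolding Hmap_fst_snd
    apply -
    apply (rule derivative_eq_intros refl | simp add: assms)+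
    apply (rule ext)
    apply (simp add: jac23_def sc3_def Hmap_dz_def Hmap_dw_def divide_simps)
    apply (simp add: algebra_simps power2_eq_square)
    done
qed

lemma continuous_on_Hmap_dz: "continuous_on bidisc_minus_diag Hmap_dz"
  unfolding Hmap_dz_def case_prod_beta by (intro continuous_intros) (auto simp: bidisc_minus_diag_def)

lemma continuous_on_Hmap_dw: "continuous_on bidisc_minus_diag Hmap_dw"
  unfolding Hmap_dw_def case_prod_beta by (intro continuous_intros) (auto simp: bidisc_minus_diag_def)

lemma open_bidisc_minus_diag: "open bidisc_minus_diag"
  unfolding bidisc_minus_diag_def case_prod_beta mem_ball_0
  by (intro open_Collect_conj open_Collect_less open_Collect_neq continuous_intros)

definition Ginv_domain :: "(complex \<times> complex \<times> complex) set" where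
  "Ginv_domain = {(z1, z2, z3). z1 + z3 + \<i> * (1 - z2) \<noteq> 0 \<and> z1 + z3 + \<i> * (- 1 - z2) \<noteq> 0}"

text \<open>\<open>Ginv\<close> depends on \<open>z1\<close> and \<open>z3\<close> only through \<open>z1 + z3\<close>, so its partial derivatives
  in these two variables coincide.\<close>

definition Ginv_d13 :: "complex \<times> complex \<times> complex \<Rightarrow> complex \<times> complex" where
  "Ginv_d13 = (\<lambda>(z1, z2, z3).
     (- 2 * (1 - z2) / (z1 + z3 + \<i> * (1 - z2))\<^sup>2, - 2 * (- 1 - z2) / (z1 + z3 + \<i> * (- 1 - z2))\<^sup>2))"

definition Ginv_d2 :: "complex \<times> complex \<times> complex \<Rightarrow> complex \<times> complex" where
  "Ginv_d2 = (\<lambda>(z1, z2, z3).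
     (- 2 * (z1 + z3) / (z1 + z3 + \<i> * (1 - z2))\<^sup>2, - 2 * (z1 + z3) / (z1 + z3 + \<i> * (- 1 - z2))\<^sup>2))"

lemma Ginv_has_derivative:
  assumes "p \<in> Ginv_domain"
  shows "(Ginv has_derivative jac32 (Ginv_d13 p) (Ginv_d2 p) (Ginv_d13 p)) (at p)"
proof -
  obtain z1 z2 z3 where p: "p = (z1, z2, z3)"
    by (metis prod.exhaust)
  have Ginv_fst_snd: "Ginv = (\<lambda>p. (cayley (fst p + snd (snd p)) (1 - fst (snd p)),
      cayley (fst p + snd (snd p)) (- 1 - fst (snd p))))"
    by (auto simp: Ginv_def)
  have "z1 + z3 + \<i> * (1 - z2) \<noteq> 0" "z1 + z3 + \<i> * (- 1 - z2) \<noteq> 0"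
    using assms by (simp_all add: p Ginv_domain_def)
  then show ?thesis
    unfolding Ginv_fst_snd p cayley_def
    apply -
    apply (rule derivative_eq_intros refl | simp)+
    apply (rule ext)
    apply (simp add: jac32_def sc2_def Ginv_d13_def Ginv_d2_def divide_simps)
    apply (simp add: algebra_simps power2_eq_square)
    done
qed

lemma continuous_on_Ginv_d13: "continuous_on Ginv_domain Ginv_d13"
  unfolding Ginv_d13_def case_prod_beta by (intro continuous_intros) (auto simp: Ginv_domain_def)

lemma continuous_on_Ginv_d2: "continuous_on Ginv_domain Ginv_d2"
  unfolding Ginv_d2_def case_prod_beta by (intro continuous_intros) (auto simp: Ginv_domain_def)

lemma open_Ginv_domain: "open Ginv_domain"
  unfolding Ginv_domain_def case_prod_beta by (intro open_Collect_conj open_Collect_neq continuous_intros)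

lemma D2_1inf_subset_Ginv_domain: "D2_1inf \<subseteq> Ginv_domain"
proof
  fix p assume "p \<in> D2_1inf"
  moreover obtain z1 z2 z3 where p: "p = (z1, z2, z3)"
    by (metis prod.exhaust)
  ultimately have "(z1, z2, z3) \<in> D2_1inf"
    by simp
  then show "p \<in> Ginv_domain"
    using cayley_in_disc(1)[OF D2_1inf_Im_mult_cnj_pos(1)] cayley_in_disc(1)[OF D2_1inf_Im_mult_cnj_pos(2)]
    by (simp add: p Ginv_domain_def)
qed

lemma Hmap_has_derivative_on_bidisc:
  "x \<in> bidisc_minus_diag \<Longrightarrow> (Hmap has_derivative jac23 (Hmap_dz x) (Hmap_dw x)) (at x)"
  by (auto simp: bidisc_minus_diag_def intro: Hmap_has_derivative)

lemma holo23_Hmap: "holo23 bidisc_minus_diag Hmap"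
  using open_bidisc_minus_diag Hmap_has_derivative_on_bidisc by (rule holo23_jac23)

lemma holo32_Ginv: "holo32 Ginv_domain Ginv"
  using open_Ginv_domain Ginv_has_derivative by (rule holo32_jac32)

lemma inv_into_Hmap_eq_Ginv:
  assumes "S \<subseteq> bidisc_minus_diag" "p \<in> Hmap ` S"
  shows "inv_into S Hmap p = Ginv p"
proof -
  obtain x where "x \<in> S" "p = Hmap x"
    using assms(2) by blast
  moreover have "inj_on Hmap S"
    using bij_betw_imp_inj_on[OF bij_betw_Hmap] assms(1) by (rule inj_on_subset)
  ultimately show ?thesis
    using assms(1) by (auto simp: bidisc_minus_diag_def Ginv_Hmap)
qed

lemma biholo_Hmap: "biholo bidisc_minus_diag D2_1inf Hmap"
  unfolding biholo_def holo_on_sub32_def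
proof (intro conjI holo23_Hmap bij_betw_Hmap ballI)
  fix p assume "p \<in> D2_1inf"
  then show "\<exists>V G. open V \<and> p \<in> V \<and> holo32 V G \<and>
      (\<forall>q\<in>V \<inter> D2_1inf. G q = inv_into bidisc_minus_diag Hmap q)"
    using open_Ginv_domain holo32_Ginv D2_1inf_subset_Ginv_domain
      inv_into_Hmap_eq_Ginv[OF order_refl] bij_betw_imp_surj_on[OF bij_betw_Hmap]
    by (intro exI[of _ Ginv_domain] exI[of _ Ginv]) auto
qed

lemma CR_map_Hmap:
  assumes "S \<subseteq> bidisc_minus_diag"
  shows "CR_map (sc2 \<i>) (sc3 \<i>) S Hmap"
  using open_bidisc_minus_diag assms Hmap_has_derivative_on_bidisc
  by (rule CR_map_of_C1_extension)
    (simp_all add: jac23_sc2 continuous_on_jac23 continuous_on_Hmap_dz continuous_on_Hmap_dw)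

lemma CR_map_Ginv:
  assumes "T \<subseteq> Ginv_domain" "\<And>q. q \<in> T \<Longrightarrow> Ginv q = \<psi> q"
  shows "CR_map (sc3 \<i>) (sc2 \<i>) T \<psi>"
  using open_Ginv_domain assms(1) Ginv_has_derivative
  by (rule CR_map_of_C1_extension)
    (simp_all add: jac32_sc3 continuous_on_jac32 continuous_on_Ginv_d13 continuous_on_Ginv_d2 assms(2))

section \<open>Level sets\<close>

lemma bij_betw_level_sets:
  assumes "bij_betw f A B" "\<And>x. x \<in> A \<Longrightarrow> \<psi> (f x) = g (\<phi> x)" "inj_on g (insert c (\<phi> ` A))"
  shows "bij_betw f {x \<in> A. \<phi> x = c} {y \<in> B. \<psi> y = g c}"
  unfolding bij_betw_def
proof
  show "inj_on f {x \<in> A. \<phi> x = c}"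
    using assms(1) by (rule inj_on_subset[OF bij_betw_imp_inj_on]) auto
  show "f ` {x \<in> A. \<phi> x = c} = {y \<in> B. \<psi> y = g c}"
  proof (intro equalityI subsetI)
    fix y assume "y \<in> f ` {x \<in> A. \<phi> x = c}"
    then show "y \<in> {y \<in> B. \<psi> y = g c}"
      using assms(1,2) bij_betw_apply by fastforce
  next
    fix y assume y: "y \<in> {y \<in> B. \<psi> y = g c}"
    then obtain x where x: "x \<in> A" "y = f x"
      using assms(1) by (auto simp: bij_betw_def)
    with y assms(2) have "g (\<phi> x) = g c"
      by simp
    then have "\<phi> x = c"
      using inj_onD[OF assms(3)] x(1) by blast
    with x show "y \<in> f ` {x \<in> A. \<phi> x = c}"
      by blast
  qed
qed

lemma Fa_eq_level_set: "0 < a \<Longrightarrow> Fa a = {x \<in> bidisc_minus_diag. case_prod pseudo_dist x = a}"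
  by (auto simp: Fa_def bidisc_minus_diag_def pseudo_dist_def)

lemma eta2_eq_level_set: "eta2 \<alpha> = {p \<in> D2_1inf. lorentz_form p = sqrt ((\<alpha> + 1) / 2)}"
  by (auto simp: eta2_def lorentz_form_def)

lemma pseudo_dist_pos:
  assumes "cmod z < 1" "cmod w < 1" "z \<noteq> w"
  shows "pseudo_dist z w > 0"
  using one_minus_cnj_mult_neq_0[OF assms(1,2)] assms(3) by (simp add: pseudo_dist_def)

lemma inj_on_two_div_sq: "inj_on (\<lambda>t::real. 2 / t\<^sup>2 - 1) {0<..}"
proof (rule inj_onI)
  fix s t :: real
  assume "s \<in> {0<..}" "t \<in> {0<..}" "2 / s\<^sup>2 - 1 = 2 / t\<^sup>2 - 1"
  then show "s = t"
    by (simp add: field_simps)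
qed

lemma bij_betw_Hmap_Fa_eta2:
  assumes "0 < a" "a < 1"
  shows "bij_betw Hmap (Fa a) (eta2 (8 / a ^ 4 - 8 / a ^ 2 + 1))"
proof -
  have "(8 / a ^ 4 - 8 / a ^ 2 + 1 + 1) / 2 = (2 / a\<^sup>2 - 1)\<^sup>2"
    using assms(1) by (simp add: field_simps power2_eq_square power4_eq_xxxx)
  moreover have "a\<^sup>2 < 1"
    using assms by (simp add: abs_square_less_1)
  then have "2 / a\<^sup>2 - 1 > 0"
    using assms(1) by (simp add: field_simps)
  ultimately have sqrt_eq: "sqrt ((8 / a ^ 4 - 8 / a ^ 2 + 1 + 1) / 2) = 2 / a\<^sup>2 - 1"
    by simp
  have "inj_on (\<lambda>t::real. 2 / t\<^sup>2 - 1) (insert a (case_prod pseudo_dist ` bidisc_minus_diag))"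
    using assms(1) pseudo_dist_pos
    by (intro inj_on_subset[OF inj_on_two_div_sq]) (auto simp: bidisc_minus_diag_def)
  then have "bij_betw Hmap {x \<in> bidisc_minus_diag. case_prod pseudo_dist x = a}
      {p \<in> D2_1inf. lorentz_form p = 2 / a\<^sup>2 - 1}"
    using lorentz_form_Hmap_pseudo_dist
    by (intro bij_betw_level_sets[OF bij_betw_Hmap]) (auto simp: bidisc_minus_diag_def)
  then show ?thesis
    unfolding Fa_eq_level_set[OF assms(1)] eta2_eq_level_set sqrt_eq .
qed

theorem proposition2p1:
  shows "biholo bidisc_minus_diag D2_1inf Hmap \<and>
    (\<forall>a::real. 0 < a \<and> a < 1 \<longrightarrow>
       CR_iso (sc2 \<i>) (sc3 \<i>) (Fa a) (eta2 (8 / a ^ 4 - 8 / a ^ 2 + 1)) Hmap)"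
proof (intro conjI allI impI biholo_Hmap)
  fix a :: real
  assume a: "0 < a \<and> a < 1"
  then have bij: "bij_betw Hmap (Fa a) (eta2 (8 / a ^ 4 - 8 / a ^ 2 + 1))"
    by (simp add: bij_betw_Hmap_Fa_eta2)
  have Fa_sub: "Fa a \<subseteq> bidisc_minus_diag"
    using a by (auto simp: Fa_eq_level_set)
  have "eta2 (8 / a ^ 4 - 8 / a ^ 2 + 1) \<subseteq> Ginv_domain"
    using D2_1inf_subset_Ginv_domain by (auto simp: eta2_eq_level_set)
  moreover have "Ginv q = inv_into (Fa a) Hmap q" if "q \<in> eta2 (8 / a ^ 4 - 8 / a ^ 2 + 1)" for q
    using inv_into_Hmap_eq_Ginv[OF Fa_sub] bij_betw_imp_surj_on[OF bij] that by simp
  ultimately show "CR_iso (sc2 \<i>) (sc3 \<i>) (Fa a) (eta2 (8 / a ^ 4 - 8 / a ^ 2 + 1)) Hmap"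
    unfolding CR_iso_def using bij CR_map_Hmap[OF Fa_sub] CR_map_Ginv by blast
qed

end
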